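(* Let $n\ge2$ and $\mathsf u\in\mathcal S_n$. Then $\mathsf r^{\mathsf u}$ is a cyclic factorization of $\lambda_n$.
   Context: $\widetilde S_n$ is the group, under composition $(vw)(k)=v(w(k))$, of bijections $w:\mathbb Z\to\mathbb Z$ with $w(i+n)=w(i)+n$ and $\sum_{i=1}^n w(i)=\binom{n+1}2$. For $i\not\equiv j\pmod n$, $(\!(i,j)\!)$ swaps $i+kn$ and $j+kn$ for all $k$; $(\!(i,j)\!)=(\!(j,i)\!)=(\!(i+kn,j+kn)\!)$; $s_i=(\!(i,i+1)\!)$, $i\in\{0,\dots,n-1\}$. "$i\bmod n$" is the representative in $\{1,\dots,n\}$. $\lambda_n(k)=k+n$ for $k\not\equiv0\pmod n$, $\lambda_n(k)=k-n(n-1)$ for $k\equiv0\pmod n$; its reflection length is $2n-2$; $\textsc{fact}(\lambda_n)$ is the set of sequences of $2n-2$ reflections with product $\lambda_n$. Such $[r_1,\dots,r_{2n-2}]$ is tree-like if one can write $r_i=(\!(a_{i-1},b_i)\!)$ with integers $a_{i-1}<b_i$ and $a_i\equiv b_i\pmod n$ ($1\le i\le 2n-3$). For $k\in[n]$, $N_{\mathsf r}(k)$ is the list, in increasing order of $i$, of $b_i\bmod n$ over all $i$ with $a_{i-1}\equiv k\pmod n$. A tree-like $\mathsf r$ is cyclic if (i) $N_{\mathsf r}(n)$ is strictly increasing and (ii) for each $1\le k<n$, writing $N_{\mathsf r}(k)=[c_1,\dots,c_\ell]$, there is $1\le j\le \ell$ with $c_j<\dots<c_{\ell-1}<k<c_1<\dots<c_{j-1}$.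 $\bm\lambda_n$ is the word $[s_0,\dots,s_{n-1}]$ repeated $n-1$ times with $j$-th letter $\sigma_j=s_{(j-1)\bmod n}$ (index in $\{0,\dots,n-1\}$). A subword is $\mathsf u=[u_1,\dots,u_{n(n-1)}]$ with $u_j\in\{\sigma_j,e\}$; $j$ is a skip if $u_j=e$. $u_{(j)}=u_1\cdots u_j$, $u_{(0)}=e$. $\mathcal S_n$ is the set of subwords with exactly $2n-2$ skips and product $e$. $\textsc{inv}(\mathsf u)=[t_1,\dots,t_{n(n-1)}]$, $t_j=u_{(j-1)}\sigma_ju_{(j-1)}^{-1}$; $\mathsf r^{\mathsf u}$ is the subsequence of the $t_j$ at skips, in increasing order. *)

theory Defs
  imports Main
begin

text \<open>Affine permutations are represented as functions int => int; composition
  (v w)(k) = v (w k) is function composition.\<close>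

definition modn :: "nat \<Rightarrow> int \<Rightarrow> int" where
  "modn n x = (x - 1) mod int n + 1"

text \<open>The reflection ((i,j)): swaps i+kn and j+kn for all k (meaningful for i, j
  not congruent mod n).\<close>
definition refl_aff :: "nat \<Rightarrow> int \<Rightarrow> int \<Rightarrow> int \<Rightarrow> int" where
  "refl_aff n i j k =
     (if k mod int n = i mod int n then k - i + j
      else if k mod int n = j mod int n then k - j + i
      else k)"

definition is_reflection :: "nat \<Rightarrow> (int \<Rightarrow> int) \<Rightarrow> bool" where
  "is_reflection n r \<longleftrightarrow> (\<exists>i j. i mod int n \<noteq> j mod int n \<and> r = refl_aff n i j)"

definition sgen :: "nat \<Rightarrow> int \<Rightarrow> int \<Rightarrow> int" where
  "sgen n i = refl_aff n i (i + 1)"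

definition prodw :: "(int \<Rightarrow> int) list \<Rightarrow> int \<Rightarrow> int" where
  "prodw ws = foldr (\<circ>) ws id"

definition lambda_aff :: "nat \<Rightarrow> int \<Rightarrow> int" where
  "lambda_aff n k = (if k mod int n \<noteq> 0 then k + int n else k - int n * (int n - 1))"

definition fact_lambda :: "nat \<Rightarrow> (int \<Rightarrow> int) list set" where
  "fact_lambda n = {rs. length rs = 2 * n - 2 \<and> (\<forall>r \<in> set rs. is_reflection n r)
                        \<and> prodw rs = lambda_aff n}"

text \<open>Tree-like witnesses: r_i = ((a_(i-1), b_i)), a_(i-1) < b_i, and
  a_i = b_i mod n for 1 <= i <= 2n-3.  Indices: r_i = rs ! (i-1), i = 1..2n-2;
  a is used at 0..2n-3, b at 1..2n-2.\<close>
definition treelike_wit :: "nat \<Rightarrow> (int \<Rightarrow> int) list \<Rightarrow> (nat \<Rightarrow> int) \<Rightarrow> (nat \<Rightarrow> int) \<Rightarrow> bool" where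
  "treelike_wit n rs a b \<longleftrightarrow>
     (\<forall>i \<in> {1..length rs}.
        a (i - 1) mod int n \<noteq> b i mod int n \<and>
        rs ! (i - 1) = refl_aff n (a (i - 1)) (b i) \<and> a (i - 1) < b i) \<and>
     (\<forall>i \<in> {1..2 * n - 3}. a i mod int n = b i mod int n)"

definition treelike :: "nat \<Rightarrow> (int \<Rightarrow> int) list \<Rightarrow> bool" where
  "treelike n rs \<longleftrightarrow> (\<exists>a b. treelike_wit n rs a b)"

definition Nlist :: "nat \<Rightarrow> nat \<Rightarrow> (nat \<Rightarrow> int) \<Rightarrow> (nat \<Rightarrow> int) \<Rightarrow> int \<Rightarrow> int list" where
  "Nlist n m a b k = map (\<lambda>i. modn n (b i)) (filter (\<lambda>i. modn n (a (i - 1)) = modn n k) [1..<m + 1])"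

text \<open>Condition (ii) for N = [c_1,...,c_l]: there is 1 <= j <= l with
  c_j < ... < c_(l-1) < k < c_1 < ... < c_(j-1); here j' = j - 1.\<close>
definition cyc_cond :: "int \<Rightarrow> int list \<Rightarrow> bool" where
  "cyc_cond k cs \<longleftrightarrow> (\<exists>j' < length cs.
      sorted_wrt (<) (drop j' (butlast cs) @ [k] @ take j' cs))"

definition cyclic_fact :: "nat \<Rightarrow> (int \<Rightarrow> int) list \<Rightarrow> bool" where
  "cyclic_fact n rs \<longleftrightarrow> (\<exists>a b. treelike_wit n rs a b \<and>
      sorted_wrt (<) (Nlist n (length rs) a b (int n)) \<and>
      (\<forall>k \<in> {1..<int n}. cyc_cond k (Nlist n (length rs) a b k)))"

definition cyclic_factorization_of_lambda :: "nat \<Rightarrow> (int \<Rightarrow> int) list \<Rightarrow> bool" where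
  "cyclic_factorization_of_lambda n rs \<longleftrightarrow> rs \<in> fact_lambda n \<and> treelike n rs \<and> cyclic_fact n rs"

text \<open>j-th letter of the word bold-lambda_n, j = 1..n(n-1): sigma_j = s_((j-1) mod n).\<close>
definition sigma :: "nat \<Rightarrow> nat \<Rightarrow> int \<Rightarrow> int" where
  "sigma n j = sgen n (int ((j - 1) mod n))"

definition is_subword :: "nat \<Rightarrow> (int \<Rightarrow> int) list \<Rightarrow> bool" where
  "is_subword n u \<longleftrightarrow> length u = n * (n - 1) \<and>
     (\<forall>j \<in> {1..n * (n - 1)}. u ! (j - 1) = sigma n j \<or> u ! (j - 1) = id)"

definition skips :: "(int \<Rightarrow> int) list \<Rightarrow> nat list" where
  "skips u = filter (\<lambda>j. u ! (j - 1) = id) [1..<length u + 1]"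

definition S_set :: "nat \<Rightarrow> (int \<Rightarrow> int) list set" where
  "S_set n = {u. is_subword n u \<and> length (skips u) = 2 * n - 2 \<and> prodw u = id}"

definition upref :: "(int \<Rightarrow> int) list \<Rightarrow> nat \<Rightarrow> int \<Rightarrow> int" where
  "upref u j = prodw (take j u)"

definition tinv :: "nat \<Rightarrow> (int \<Rightarrow> int) list \<Rightarrow> nat \<Rightarrow> int \<Rightarrow> int" where
  "tinv n u j = upref u (j - 1) \<circ> sigma n j \<circ> inv (upref u (j - 1))"

definition r_of :: "nat \<Rightarrow> (int \<Rightarrow> int) list \<Rightarrow> (int \<Rightarrow> int) list" where
  "r_of n u = map (tinv n u) (skips u)"

end

theory Submission
  imports Defs
begin

text \<open>Write \<open>w\<^sub>t = u\<^sub>1 \<cdots> u\<^sub>t\<close>. The inversion at a skip \<open>j = t+1\<close> is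
  \<open>w\<^sub>t \<sigma>\<^sub>j w\<^sub>t\<^sup>-\<^sup>1 = ((w\<^sub>t(t), w\<^sub>t(t+1)))\<close>, and pushing the letters of the word past the
  prefix products shows \<open>\<sigma>\<^sub>1 \<cdots> \<sigma>\<^sub>n\<^sub>(\<^sub>n\<^sub>-\<^sub>1\<^sub>) = r\<^sup>u w\<^sub>n\<^sub>(\<^sub>n\<^sub>-\<^sub>1\<^sub>) = r\<^sup>u\<close>; the left side is
  \<open>c\<^sup>n\<^sup>-\<^sup>1 = \<lambda>\<^sub>n\<close> for the Coxeter element \<open>c = s\<^sub>0 \<cdots> s\<^sub>n\<^sub>-\<^sub>1\<close>.

  Everything else is read off the window \<open>w\<^sub>t(t), \<dots>, w\<^sub>t(t+n-1)\<close>, which contains one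
  representative of each residue mod \<open>n\<close>. Keeping a letter slides the window; skipping it
  exchanges the residue in front (the carrier) with the one stored in box \<open>t mod (n-1)\<close>.
  By induction on \<open>t\<close>, the value of each window entry is determined by its residue \<open>e\<close>
  and the number of times \<open>e\<close> has been carried so far. Since \<open>w\<^sub>n\<^sub>(\<^sub>n\<^sub>-\<^sub>1\<^sub>) = e\<close>, this residue
  machine returns to its initial state with every residue carried exactly \<open>n-1\<close> times,
  and as there are only \<open>2n-2\<close> skips, each of the \<open>n-1\<close> boxes is hit exactly twice.
  These constraints give \<open>a\<^sub>i\<^sub>-\<^sub>1 < b\<^sub>i\<close>, the tree-like property (consecutive inversions
  share the current carrier) and the cyclic order of the lists \<open>N(k)\<close>: a skip at which
  \<open>k < n\<close> is carried for the \<open>j\<close>-th time (\<open>j < n-1\<close>) hands over the carrier to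
  \<open>k + j\<close> reduced into \<open>{1..n-1}\<close>, and one from \<open>n\<close> hands it over to \<open>j + 1\<close>.\<close>

section \<open>Periodic bijections and affine reflections\<close>

definition periodic :: "nat \<Rightarrow> (int \<Rightarrow> int) \<Rightarrow> bool" where
  "periodic n f \<longleftrightarrow> (\<forall>x. f (x + int n) = f x + int n)"

lemma periodic_shift:
  assumes "periodic n f"
  shows "f (x + m * int n) = f x + m * int n"
proof -
  have nonneg: "f (x + int k * int n) = f x + int k * int n" for x k
  proof (induction k arbitrary: x)
    case (Suc k)
    have "f (x + int (Suc k) * int n) = f ((x + int k * int n) + int n)"
      by (simp add: algebra_simps)
    also have "\<dots> = f (x + int k * int n) + int n"
      using assms periodic_def by blast
    finally show ?case
      using Suc by (simp add: algebra_simps)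
  qed simp
  show ?thesis
  proof (cases "m \<ge> 0")
    case True
    then show ?thesis using nonneg[of x "nat m"] by simp
  next
    case False
    then show ?thesis
      using nonneg[of "x + m * int n" "nat (- m)"] by (simp add: algebra_simps)
  qed
qed

lemma periodic_id: "periodic n id"
  unfolding periodic_def by simp

lemma periodic_comp: "periodic n f \<Longrightarrow> periodic n g \<Longrightarrow> periodic n (f \<circ> g)"
  unfolding periodic_def by simp

lemma mod_eq_obtain:
  assumes "(a::int) mod m = b mod m"
  obtains q where "a = b + q * m"
proof -
  obtain q where "a - b = m * q"
    using assms by (metis dvdE mod_eq_dvd_iff)
  then show ?thesis
    using that[of q] by (simp add: algebra_simps)
qed

lemma periodic_inj_mod_eq:
  assumes "periodic n f" "inj f" "f a mod int n = f b mod int n"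
  shows "a mod int n = b mod int n"
proof -
  obtain q where "f a = f b + q * int n"
    using assms(3) by (rule mod_eq_obtain)
  then have "f a = f (b + q * int n)"
    using periodic_shift[OF assms(1)] by (simp add: algebra_simps)
  then have "a = b + q * int n"
    using assms(2) by (simp add: inj_eq)
  then show ?thesis by simp
qed

lemma refl_aff_periodic: "periodic n (refl_aff n i j)"
  unfolding periodic_def refl_aff_def by auto

lemma refl_aff_involution:
  assumes "i mod int n \<noteq> j mod int n"
  shows "refl_aff n i j (refl_aff n i j k) = k"
proof -
  consider "k mod int n = i mod int n" | "k mod int n = j mod int n"
    | "k mod int n \<noteq> i mod int n" "k mod int n \<noteq> j mod int n"
    by blast
  then show ?thesis
  proof cases
    case 1
    obtain q where "k = i + q * int n" using 1 by (rule mod_eq_obtain)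
    then show ?thesis using assms unfolding refl_aff_def by auto
  next
    case 2
    obtain q where "k = j + q * int n" using 2 by (rule mod_eq_obtain)
    then show ?thesis using assms unfolding refl_aff_def by auto
  qed (auto simp: refl_aff_def)
qed

lemma bij_refl_aff: "i mod int n \<noteq> j mod int n \<Longrightarrow> bij (refl_aff n i j)"
  by (rule involuntory_imp_bij) (rule refl_aff_involution)

lemma refl_aff_translate:
  assumes "i' mod int n = i mod int n" "j' - i' = j - i"
  shows "refl_aff n i' j' = refl_aff n i j"
proof -
  obtain q where "i' = i + q * int n" using assms(1) by (rule mod_eq_obtain)
  moreover from this have "j' = j + q * int n" using assms(2) by simp
  ultimately show ?thesis
    unfolding refl_aff_def by (auto simp: fun_eq_iff algebra_simps)
qed

lemma periodic_refl_aff_commute: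
  assumes per: "periodic n f" and inj: "inj f" and ij: "i mod int n \<noteq> j mod int n"
  shows "f (refl_aff n i j z) = refl_aff n (f i) (f j) (f z)"
proof -
  have mod_iff: "f z mod int n = f y mod int n \<longleftrightarrow> z mod int n = y mod int n" for y
    using periodic_inj_mod_eq[OF per inj] by (metis mod_eq_obtain mod_mult_self1 periodic_shift[OF per])
  consider "z mod int n = i mod int n" | "z mod int n = j mod int n"
    | "z mod int n \<noteq> i mod int n" "z mod int n \<noteq> j mod int n"
    by blast
  then show ?thesis
  proof cases
    case 1
    obtain q where "z = i + q * int n" using 1 by (rule mod_eq_obtain)
    then show ?thesis
      using ij periodic_shift[OF per, of j q] periodic_shift[OF per, of i q]
      unfolding refl_aff_def by (auto simp: add.commute)
  next
    case 2
    obtain q where q: "z = j + q * int n" using 2 by (rule mod_eq_obtain)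
    have "f z mod int n \<noteq> f i mod int n" using 2 ij mod_iff by simp
    then show ?thesis
      using q ij periodic_shift[OF per, of j q] periodic_shift[OF per, of i q]
      unfolding refl_aff_def by (auto simp: add.commute)
  next
    case 3
    then show ?thesis
      using mod_iff unfolding refl_aff_def by auto
  qed
qed

lemma conj_refl_aff:
  assumes "periodic n f" and "bij f" and "i mod int n \<noteq> j mod int n"
  shows "f \<circ> refl_aff n i j \<circ> inv f = refl_aff n (f i) (f j)"
proof
  fix x
  have "x = f (inv f x)"
    using \<open>bij f\<close> by (simp add: bij_is_surj surj_f_inv_f)
  then show "(f \<circ> refl_aff n i j \<circ> inv f) x = refl_aff n (f i) (f j) x"
    using periodic_refl_aff_commute[OF assms(1) bij_is_inj[OF assms(2)] assms(3)] by (metis comp_apply)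
qed

section \<open>The product of the word: a power of the Coxeter element\<close>

lemma prodw_Nil [simp]: "prodw [] = id"
  unfolding prodw_def by simp

lemma prodw_append: "prodw (xs @ ys) = prodw xs \<circ> prodw ys"
  unfolding prodw_def by (induction xs) auto

lemma prodw_snoc: "prodw (xs @ [x]) = prodw xs \<circ> x"
  unfolding prodw_def by (induction xs) auto

lemma mod_add_small:
  assumes "(k::int) mod int n = r" "0 \<le> r + d" "r + d < int n"
  shows "(k + d) mod int n = r + d"
proof -
  have "(k + d) mod int n = (r + d) mod int n"
    using assms(1) by (metis mod_add_left_eq)
  then show ?thesis using assms(2,3) by simp
qed

definition coxeter_prefix :: "nat \<Rightarrow> nat \<Rightarrow> int \<Rightarrow> int" where
  "coxeter_prefix n m = prodw (map (\<lambda>i. sgen n (int i)) [0..<m])"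

definition coxeter :: "nat \<Rightarrow> int \<Rightarrow> int" where
  "coxeter n = coxeter_prefix n n"

lemma coxeter_prefix_Suc: "coxeter_prefix n (Suc m) = coxeter_prefix n m \<circ> sgen n (int m)"
  unfolding coxeter_prefix_def by (simp add: prodw_snoc)

lemma coxeter_prefix_apply:
  assumes "n \<ge> 2" "1 \<le> m" "m \<le> n - 1"
  shows "coxeter_prefix n m k =
    (if k mod int n = 0 then k + 1 else if k mod int n < int m then k + 1
     else if k mod int n = int m then k - int m else k)"
  using assms(2,3)
proof (induction m arbitrary: k)
  case (Suc m)
  have mod_m: "int m mod int n = int m" "(int m + 1) mod int n = int m + 1"
    using Suc.prems by simp_all
  show ?case
  proof (cases "m = 0")
    case True
    have "coxeter_prefix n 1 = sgen n 0"
      unfolding coxeter_prefix_def by (simp add: prodw_def)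
    moreover have "0 \<le> k mod int n" "(1::int) mod int n = 1"
      using assms(1) by simp_all
    ultimately show ?thesis
      using True unfolding sgen_def refl_aff_def by auto
  next
    case False
    then have IH: "coxeter_prefix n m k' =
        (if k' mod int n = 0 then k' + 1 else if k' mod int n < int m then k' + 1
         else if k' mod int n = int m then k' - int m else k')" for k'
      using Suc by simp
    consider "k mod int n = int m" | "k mod int n = int m + 1"
      | "k mod int n \<noteq> int m" "k mod int n \<noteq> int m + 1"
      by blast
    then show ?thesis
    proof cases
      case 1
      have "(k + 1) mod int n = int m + 1"
        using mod_add_small[OF 1] Suc.prems by simp
      then show ?thesis
        using 1 mod_m IH[of "k + 1"] by (simp add: coxeter_prefix_Suc sgen_def refl_aff_def)
    next
      case 2
      have "(k + (- 1)) mod int n = int m"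
        using mod_add_small[OF 2, of "- 1"] Suc.prems by simp
      then show ?thesis
        using 2 False mod_m IH[of "k - 1"] by (simp add: coxeter_prefix_Suc sgen_def refl_aff_def)
    next
      case 3
      then show ?thesis
        using mod_m IH[of k] by (auto simp: coxeter_prefix_Suc sgen_def refl_aff_def)
    qed
  qed
qed simp

lemma coxeter_apply:
  assumes n2: "n \<ge> 2"
  shows "coxeter n k =
    (if k mod int n = 0 then k - int n else if k mod int n = int n - 1 then k + 2 else k + 1)"
proof -
  have "n = Suc (n - 1)" "int (n - 1) = int n - 1"
    using n2 by simp_all
  then have last: "coxeter n k = coxeter_prefix n (n - 1) (sgen n (int n - 1) k)"
    unfolding coxeter_def by (metis coxeter_prefix_Suc comp_apply)
  have prefix: "coxeter_prefix n (n - 1) k' =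
      (if k' mod int n = 0 then k' + 1 else if k' mod int n < int n - 1 then k' + 1
       else if k' mod int n = int n - 1 then k' - (int n - 1) else k')" for k'
    using coxeter_prefix_apply[OF n2, of "n - 1"] n2 by simp
  have mod_last: "(int n - 1) mod int n = int n - 1"
    using n2 by (intro mod_pos_pos_trivial) simp_all
  consider "k mod int n = int n - 1" | "k mod int n = 0"
    | "k mod int n \<noteq> int n - 1" "k mod int n \<noteq> 0"
    by blast
  then show ?thesis
  proof cases
    case 1
    have "(k + 1) mod int n = 0"
      using 1 by (metis mod_add_left_eq diff_add_cancel mod_self)
    then show ?thesis
      using 1 mod_last n2 unfolding last prefix by (simp add: sgen_def refl_aff_def)
  next
    case 2
    have "(k - 1) mod int n = (- 1) mod int n"
      using 2 by (metis mod_diff_left_eq diff_0)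
    also have "\<dots> = int n - 1"
      using n2 by (simp add: zmod_zminus1_eq_if)
    finally have "(k - 1) mod int n = int n - 1" .
    then show ?thesis
      using 2 mod_last n2 unfolding last prefix by (simp add: sgen_def refl_aff_def)
  next
    case 3
    have "k mod int n < int n - 1"
      using 3 pos_mod_bound[of "int n" k] n2 by linarith
    then show ?thesis
      using 3 mod_last unfolding last prefix by (simp add: sgen_def refl_aff_def)
  qed
qed

lemma coxeter_pow_apply:
  assumes n2: "n \<ge> 2" and "m \<le> n - 1"
  shows "(coxeter n ^^ m) k =
    (if k mod int n = 0 then k - int m * int n
     else k + int m + (if k mod int n + int m \<ge> int n then 1 else 0))"
  using assms(2)
proof (induction m)
  case 0
  have "k mod int n < int n" using n2 by simp
  then show ?case by simp
next
  case (Suc m)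
  define r where "r = k mod int n"
  have r: "0 \<le> r" "r < int n" "(k + d) mod int n = (r + d) mod int n" for d
    using n2 unfolding r_def by (simp_all add: mod_add_left_eq)
  have m: "int m + 1 \<le> int n - 1"
    using Suc.prems n2 by simp
  have IH: "(coxeter n ^^ m) k =
      (if r = 0 then k - int m * int n else k + int m + (if r + int m \<ge> int n then 1 else 0))"
    using Suc r_def by simp
  have step: "(coxeter n ^^ Suc m) k = coxeter n ((coxeter n ^^ m) k)"
    by simp
  consider "r = 0" | "r \<noteq> 0" "r + int m \<ge> int n" | "r \<noteq> 0" "r + int m = int n - 1"
    | "r \<noteq> 0" "r + int m < int n - 1"
    by linarith
  then show ?case
  proof cases
    case 1
    have "(k - int m * int n) mod int n = 0"
      using 1 r_def by (simp add: mod_diff_eq[symmetric])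
    moreover have pow: "(coxeter n ^^ m) k = k - int m * int n"
      using 1 IH by simp
    ultimately show ?thesis
      unfolding step pow using 1 r_def coxeter_apply[OF n2, of "k - int m * int n"]
      by (simp add: algebra_simps)
  next
    case 2
    have "(k + (int m + 1)) mod int n = (r + int m + 1 - int n) mod int n"
      using r(3) by (metis minus_mod_self2 add.assoc)
    also have "\<dots> = r + int m + 1 - int n"
      using 2 r m by (intro mod_pos_pos_trivial) linarith+
    moreover have "r + int m + 1 - int n \<noteq> int n - 1"
      using r(2) m by linarith
    moreover have pow: "(coxeter n ^^ m) k = k + (int m + 1)"
      using 2 IH by simp
    ultimately show ?thesis
      unfolding step pow using 2 r m coxeter_apply[OF n2, of "k + (int m + 1)"]
      by (simp add: r_def)
  next
    case 3
    have "(k + int m) mod int n = int n - 1"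
      using 3 r mod_add_small[OF r_def[symmetric], of "int m"] by simp
    moreover have pow: "(coxeter n ^^ m) k = k + int m"
      using 3 IH by simp
    ultimately show ?thesis
      unfolding step pow using 3 n2 r_def coxeter_apply[OF n2, of "k + int m"] by simp
  next
    case 4
    have "(k + int m) mod int n = r + int m"
      using 4 r mod_add_small[OF r_def[symmetric], of "int m"] by simp
    moreover have pow: "(coxeter n ^^ m) k = k + int m"
      using 4 IH by simp
    ultimately show ?thesis
      unfolding step pow using 4 n2 r r_def coxeter_apply[OF n2, of "k + int m"] by simp
  qed
qed

lemma coxeter_pow_eq_lambda:
  assumes n2: "n \<ge> 2"
  shows "coxeter n ^^ (n - 1) = lambda_aff n"
proof
  fix k
  have "0 \<le> k mod int n" and n1: "int (n - 1) = int n - 1"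
    using n2 by simp_all
  then have "k mod int n \<noteq> 0 \<Longrightarrow> 1 \<le> k mod int n"
    by linarith
  then show "(coxeter n ^^ (n - 1)) k = lambda_aff n k"
    using n1
    unfolding coxeter_pow_apply[OF n2 le_refl] lambda_aff_def
    by (cases "k mod int n = 0") (simp_all add: algebra_simps)
qed

lemma prodw_word_eq_coxeter_pow:
  "prodw (map (\<lambda>j. sigma n (Suc j)) [0..<n * m]) = coxeter n ^^ m"
proof (induction m)
  case (Suc m)
  have "[0..<n * Suc m] = [0..<n * m] @ map (\<lambda>i. n * m + i) [0..<n]"
    unfolding mult_Suc_right add.commute[of n] upt_add_eq_append[OF le0]
    by (simp, rule nth_equalityI) simp_all
  moreover have "map (\<lambda>i. sigma n (Suc (n * m + i))) [0..<n] = map (\<lambda>i. sgen n (int i)) [0..<n]"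
    unfolding sigma_def by (rule map_cong) simp_all
  ultimately have "map (\<lambda>j. sigma n (Suc j)) [0..<n * Suc m]
      = map (\<lambda>j. sigma n (Suc j)) [0..<n * m] @ map (\<lambda>i. sgen n (int i)) [0..<n]"
    by simp
  then show ?case
    using Suc unfolding coxeter_def coxeter_prefix_def funpow_Suc_right by (simp add: prodw_append)
qed simp

section \<open>A finite machine on residues\<close>

text \<open>The machine models the residues mod \<open>n\<close> of the window \<open>w\<^sub>t(t), \<dots>, w\<^sub>t(t+n-1)\<close>,
  where \<open>w\<^sub>t\<close> is the product of the first \<open>t\<close> letters of a subword: the residue of \<open>w\<^sub>t(t)\<close> is
  the carrier, that of \<open>w\<^sub>t(t+s)\<close> (\<open>1 \<le> s \<le> n-1\<close>) sits in box \<open>(t+s-1) mod (n-1)\<close>.\<close>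

fun machine :: "nat \<Rightarrow> (nat \<Rightarrow> bool) \<Rightarrow> nat \<Rightarrow> int \<times> (nat \<Rightarrow> int)" where
  "machine n sk 0 = (int n, \<lambda>b. int b + 1)"
| "machine n sk (Suc t) = (let (c, B) = machine n sk t; b = t mod (n - 1) in
      if sk t then (B b, B(b := c)) else (c, B))"

definition carrier :: "nat \<Rightarrow> (nat \<Rightarrow> bool) \<Rightarrow> nat \<Rightarrow> int" where
  "carrier n sk t = fst (machine n sk t)"

definition boxes :: "nat \<Rightarrow> (nat \<Rightarrow> bool) \<Rightarrow> nat \<Rightarrow> nat \<Rightarrow> int" where
  "boxes n sk t = snd (machine n sk t)"

lemma carrier_0 [simp]: "carrier n sk 0 = int n"
  by (simp add: carrier_def)

lemma boxes_0 [simp]: "boxes n sk 0 b = int b + 1"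
  by (simp add: boxes_def)

lemma carrier_Suc:
  "carrier n sk (Suc t) = (if sk t then boxes n sk t (t mod (n - 1)) else carrier n sk t)"
  by (simp add: carrier_def boxes_def Let_def split: prod.splits)

lemma boxes_Suc:
  "boxes n sk (Suc t) =
    (if sk t then (boxes n sk t)(t mod (n - 1) := carrier n sk t) else boxes n sk t)"
  by (simp add: carrier_def boxes_def Let_def split: prod.splits)

fun visits :: "nat \<Rightarrow> (nat \<Rightarrow> bool) \<Rightarrow> int \<Rightarrow> nat \<Rightarrow> nat" where
  "visits n sk k 0 = 0"
| "visits n sk k (Suc t) = visits n sk k t + (if carrier n sk (Suc t) = k then 1 else 0)"

locale skip_machine =
  fixes n :: nat and sk :: "nat \<Rightarrow> bool"
  assumes n2: "n \<ge> 2"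
begin

abbreviation "T \<equiv> n * (n - 1)"
abbreviation "cr \<equiv> carrier n sk"
abbreviation "bx \<equiv> boxes n sk"
abbreviation "C \<equiv> visits n sk"

lemma column_less: "t mod (n - 1) < n - 1"
  using n2 by simp

lemma machine_state_permutation:
  "cr t \<in> {1..int n} \<and> (\<forall>b<n - 1. bx t b \<in> {1..int n}) \<and> cr t \<notin> bx t ` {..<n - 1}
   \<and> inj_on (bx t) {..<n - 1}"
proof (induction t)
  case 0
  then show ?case using n2 by (auto simp: inj_on_def)
next
  case (Suc t)
  define b where "b = t mod (n - 1)"
  have b: "b < n - 1" unfolding b_def by (rule column_less)
  show ?case
  proof (cases "sk t")
    case False
    then show ?thesis using Suc by (simp add: carrier_Suc boxes_Suc)
  next
    case True
    have cr: "cr (Suc t) = bx t b" and bx: "bx (Suc t) = (bx t)(b := cr t)"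
      using True by (simp_all add: carrier_Suc boxes_Suc b_def)
    have fresh: "\<forall>b'<n - 1. bx t b' \<noteq> cr t"
      using Suc by force
    have "cr (Suc t) \<notin> bx (Suc t) ` {..<n - 1}"
      using Suc b fresh unfolding cr bx inj_on_def by (auto split: if_splits)
    moreover have "inj_on (bx (Suc t)) {..<n - 1}"
      using Suc b fresh unfolding bx inj_on_def by (auto split: if_splits)
    moreover have "\<forall>b'<n - 1. bx (Suc t) b' \<in> {1..int n}" "cr (Suc t) \<in> {1..int n}"
      using Suc b unfolding cr bx by auto
    ultimately show ?thesis
      by blast
  qed
qed

lemma carrier_range: "cr t \<in> {1..int n}"
  using machine_state_permutation by blast

lemma carrier_ne_box: "b < n - 1 \<Longrightarrow> cr t \<noteq> bx t b"
  using machine_state_permutation by blast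

lemma visits_congruence:
  "(cr t = k \<longrightarrow> (k - 1 + int (C k t)) mod (int n - 1) = int t mod (int n - 1)) \<and>
   (\<forall>b<n - 1. bx t b = k \<longrightarrow> (k - 1 + int (C k t)) mod (int n - 1) = int b mod (int n - 1))"
proof (induction t arbitrary: k)
  case 0
  show ?case by auto
next
  case (Suc t)
  define b where "b = t mod (n - 1)"
  have b: "b < n - 1" unfolding b_def by (rule column_less)
  have b_mod: "int b mod (int n - 1) = int t mod (int n - 1)"
    using n2 unfolding b_def by (simp add: zmod_int of_nat_diff)
  have "(k - 1 + int (C k (Suc t))) mod (int n - 1) = int (Suc t) mod (int n - 1)"
    if k: "cr (Suc t) = k"
  proof -
    have "(k - 1 + int (C k t)) mod (int n - 1) = int t mod (int n - 1)"
      using Suc.IH b b_mod k by (cases "sk t") (auto simp: carrier_Suc b_def)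
    then have "(k - 1 + int (C k t) + 1) mod (int n - 1) = (int t + 1) mod (int n - 1)"
      by (metis mod_add_left_eq)
    then show ?thesis
      using k by (simp add: algebra_simps)
  qed
  moreover have "(k - 1 + int (C k (Suc t))) mod (int n - 1) = int b' mod (int n - 1)"
    if b': "b' < n - 1" "bx (Suc t) b' = k" for b'
  proof -
    have "C k (Suc t) = C k t"
      using carrier_ne_box[OF b'(1), of "Suc t"] b'(2) by simp
    then show ?thesis
      using Suc.IH b' b_mod by (cases "sk t \<and> b' = b") (auto simp: boxes_Suc b_def)
  qed
  ultimately show ?case by blast
qed

lemma carrier_congruence:
  "cr t = k \<Longrightarrow> (k - 1 + int (C k t)) mod (int n - 1) = int t mod (int n - 1)"
  using visits_congruence by blast

lemma box_congruence:
  "b < n - 1 \<Longrightarrow> bx t b = k \<Longrightarrow> (k - 1 + int (C k t)) mod (int n - 1) = int b mod (int n - 1)"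
  using visits_congruence by blast

lemma carrier_stable:
  "(\<And>s. t1 \<le> s \<Longrightarrow> s < t2 \<Longrightarrow> \<not> sk s) \<Longrightarrow> t1 \<le> t2 \<Longrightarrow> cr t2 = cr t1"
  by (induction t2) (auto simp: carrier_Suc le_Suc_eq)

lemma box_stable:
  "(\<And>s. t1 \<le> s \<Longrightarrow> s < t2 \<Longrightarrow> sk s \<Longrightarrow> s mod (n - 1) \<noteq> b) \<Longrightarrow> t1 \<le> t2 \<Longrightarrow> bx t2 b = bx t1 b"
  by (induction t2) (auto simp: boxes_Suc le_Suc_eq)

lemma visits_mono: "t1 \<le> t2 \<Longrightarrow> C k t1 \<le> C k t2"
  by (induction t2) (auto simp: le_Suc_eq)

lemma visits_strict_mono:
  assumes "t1 < t2" "cr t2 = k"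
  shows "C k t1 < C k t2"
proof -
  obtain t where "t2 = Suc t" "t1 \<le> t"
    using assms(1) by (cases t2) auto
  then show ?thesis
    using assms(2) visits_mono[of t1 t k] by simp
qed

lemma visits_stable:
  "(\<And>s. t1 < s \<Longrightarrow> s \<le> t2 \<Longrightarrow> cr s \<noteq> k) \<Longrightarrow> t1 \<le> t2 \<Longrightarrow> C k t2 = C k t1"
proof (induction t2)
  case (Suc t)
  then show ?case by (cases "t1 = Suc t") simp_all
qed simp

lemma visits_pos: "1 \<le> t \<Longrightarrow> cr t = k \<Longrightarrow> C k t \<ge> 1"
  using visits_strict_mono[of 0 t k] by simp

end

section \<open>Tracking the window along a subword\<close>

lemma modn_shift: "modn n (x + q * int n) = modn n x"
  unfolding modn_def by (metis add_diff_eq diff_add_eq mod_mult_self1)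

lemma modn_small: "1 \<le> x \<Longrightarrow> x \<le> int n \<Longrightarrow> modn n x = x"
  unfolding modn_def by simp

lemma modn_zero: "n \<ge> 1 \<Longrightarrow> modn n 0 = int n"
  using modn_shift[of n 0 1] modn_small[of "int n" n] by simp

lemma modn_eq_iff: "modn n x = modn n y \<longleftrightarrow> x mod int n = y mod int n"
  unfolding modn_def by (simp add: mod_eq_dvd_iff)

lemma mod_succ_ne: "n \<ge> 2 \<Longrightarrow> (a::int) mod int n \<noteq> (a + 1) mod int n"
  by (simp add: mod_eq_dvd_iff zdvd_not_zless)

lemma refl_aff_succ_at_succ: "n \<ge> 2 \<Longrightarrow> refl_aff n a (a + 1) (a + 1) = a"
  using mod_succ_ne[of n a] unfolding refl_aff_def by auto

lemma refl_aff_succ_at_period: "refl_aff n a (a + 1) (a + int n) = a + int n + 1"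
  unfolding refl_aff_def by auto

lemma refl_aff_succ_fixes:
  assumes "2 \<le> d" "d < int n"
  shows "refl_aff n a (a + 1) (a + d) = a + d"
proof -
  have "\<not> int n dvd x" if "0 < x" "x < int n" for x
    using zdvd_imp_le that by fastforce
  then have "\<not> int n dvd (a + d - a)" "\<not> int n dvd (a + d - (a + 1))"
    using assms by simp_all
  then have "(a + d) mod int n \<noteq> a mod int n" "(a + d) mod int n \<noteq> (a + 1) mod int n"
    unfolding mod_eq_dvd_iff by blast+
  then show ?thesis
    unfolding refl_aff_def by simp
qed

lemma sigma_Suc: "n \<ge> 1 \<Longrightarrow> sigma n (Suc t) = refl_aff n (int t) (int t + 1)"
  unfolding sigma_def sgen_def by (rule refl_aff_translate) (simp_all add: zmod_int)

lemma upref_0 [simp]: "upref u 0 = id"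
  unfolding upref_def by simp

lemma upref_Suc: "t < length u \<Longrightarrow> upref u (Suc t) = upref u t \<circ> u ! t"
  unfolding upref_def by (simp add: take_Suc_conv_app_nth prodw_snoc)

text \<open>The index \<open>t\<close> of \<open>sk\<close> is the position of the letter \<open>u\<^sub>t\<^sub>+\<^sub>1 = u ! t\<close>.\<close>

locale subword_walk = skip_machine +
  fixes u :: "(int \<Rightarrow> int) list"
  assumes subword: "is_subword n u"
    and skip_iff: "\<And>t. sk t \<longleftrightarrow> u ! t = id"
begin

abbreviation "w \<equiv> upref u"

lemma length_u: "length u = T"
  using subword unfolding is_subword_def by simp

lemma letter:
  assumes "t < T"
  shows "u ! t = (if sk t then id else refl_aff n (int t) (int t + 1))"
proof -
  have "Suc t \<in> {1..T}"
    using assms by simp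
  then have "u ! t = sigma n (Suc t) \<or> u ! t = id"
    using subword unfolding is_subword_def by fastforce
  then show ?thesis
    using skip_iff sigma_Suc[of n t] n2 by auto
qed

lemma w_skip: "t < T \<Longrightarrow> sk t \<Longrightarrow> w (Suc t) = w t"
  using upref_Suc[of t u] length_u letter by simp

lemma w_keep: "t < T \<Longrightarrow> \<not> sk t \<Longrightarrow> w (Suc t) p = w t (refl_aff n (int t) (int t + 1) p)"
  using upref_Suc[of t u] length_u letter by simp

lemma w_periodic_bij: "t \<le> T \<Longrightarrow> periodic n (w t) \<and> bij (w t)"
proof (induction t)
  case 0
  show ?case by (auto simp: periodic_def bij_betw_def inj_on_def)
next
  case (Suc t)
  then have t: "t < T" by simp
  have "periodic n (u ! t) \<and> bij (u ! t)"
    using letter[OF t] refl_aff_periodic bij_refl_aff mod_succ_ne[OF n2] by (simp add: periodic_id)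
  moreover have "w (Suc t) = w t \<circ> u ! t"
    using upref_Suc[of t u] length_u t by simp
  ultimately show ?case
    using Suc t periodic_comp bij_comp by (metis Suc_leD)
qed

lemma w_period: "t \<le> T \<Longrightarrow> w t (x + int n) = w t x + int n"
  using w_periodic_bij unfolding periodic_def by blast

text \<open>The value at position \<open>p\<close> is pinned down by its residue \<open>e\<close> and by the number of
  visits of \<open>e\<close>; the offset \<open>d\<close> is \<open>1\<close> for the carrier and \<open>0\<close> for the boxes.\<close>

definition tracks :: "nat \<Rightarrow> int \<Rightarrow> int \<Rightarrow> int \<Rightarrow> bool" where
  "tracks t p e d \<longleftrightarrow> modn n (w t p) = e \<and>
     (int n - 1) * (w t p - e) = int n * (p + d - e - int (C e t))"

definition window_tracked :: "nat \<Rightarrow> bool" where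
  "window_tracked t \<longleftrightarrow> tracks t (int t) (cr t) 1 \<and>
     (\<forall>s\<in>{1..n - 1}. tracks t (int t + int s) (bx t ((t + s - 1) mod (n - 1))) 0)"

lemma tracks_step:
  assumes "tracks t p e d" "w (Suc t) p' = w t p + j * int n"
    and "p' + d' - int (C e (Suc t)) = p + d - int (C e t) + j * (int n - 1)"
  shows "tracks (Suc t) p' e d'"
proof -
  have visits_shift: "p + d - e - int (C e t) + j * (int n - 1) = p' + d' - e - int (C e (Suc t))"
    using assms(3) by linarith
  have "(int n - 1) * (w (Suc t) p' - e) = (int n - 1) * (w t p - e) + int n * (j * (int n - 1))"
    using assms(2) by (simp add: algebra_simps)
  also have "\<dots> = int n * (p + d - e - int (C e t) + j * (int n - 1))"
    using assms(1) unfolding tracks_def by (simp add: algebra_simps)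
  also have "\<dots> = int n * (p' + d' - e - int (C e (Suc t)))"
    by (simp only: visits_shift)
  finally show ?thesis
    using assms(1,2) modn_shift unfolding tracks_def by simp
qed

lemma box_index_last: "(Suc t + (n - 1) - 1) mod (n - 1) = t mod (n - 1)"
proof -
  have "Suc t + (n - 1) - 1 = t + (n - 1)"
    by simp
  then show ?thesis
    by simp
qed

lemma box_index_shift: "1 \<le> s \<Longrightarrow> Suc t + s - 1 = t + (s + 1) - 1"
  by simp

lemma window_tracked_middle_box:
  assumes inv: "window_tracked t" and s: "1 \<le> s" "s < n - 1"
    and same_value: "w (Suc t) (int t + int (s + 1)) = w t (int t + int (s + 1))"
    and same_box: "bx (Suc t) ((t + (s + 1) - 1) mod (n - 1)) = bx t ((t + (s + 1) - 1) mod (n - 1))"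
  shows "tracks (Suc t) (int (Suc t) + int s) (bx (Suc t) ((Suc t + s - 1) mod (n - 1))) 0"
proof -
  define e where "e = bx t ((t + (s + 1) - 1) mod (n - 1))"
  have "s + 1 \<in> {1..n - 1}"
    using s by auto
  then have prev: "tracks t (int t + int (s + 1)) e 0"
    using inv unfolding window_tracked_def e_def by blast
  have "cr (Suc t) \<noteq> e"
    using carrier_ne_box[OF column_less, of "Suc t"] same_box unfolding e_def by metis
  then have "C e (Suc t) = C e t"
    by simp
  then show ?thesis
    using tracks_step[OF prev, of "int (Suc t) + int s" 0 0] same_value same_box
    unfolding box_index_shift[OF s(1)] e_def[symmetric] by (simp del: visits.simps add: algebra_simps)
qed

lemma window_tracked_keep:
  assumes t: "t < T" and keep: "\<not> sk t" and inv: "window_tracked t"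
  shows "window_tracked (Suc t)"
proof -
  define b where "b = t mod (n - 1)"
  have b: "b < n - 1" unfolding b_def by (rule column_less)
  have step: "w (Suc t) p = w t (refl_aff n (int t) (int t + 1) p)" for p
    using w_keep[OF t keep] .
  have cr: "cr (Suc t) = cr t" and bx: "bx (Suc t) = bx t"
    using keep by (simp_all add: carrier_Suc boxes_Suc)
  have visits_box: "C (bx t b') (Suc t) = C (bx t b') t" if "b' < n - 1" for b'
  proof -
    have "cr (Suc t) \<noteq> bx t b'"
      using carrier_ne_box[OF that, of "Suc t"] bx by simp
    then show ?thesis by simp
  qed
  have box1: "tracks t (int t + 1) (bx t b) 0"
    using inv n2 unfolding window_tracked_def b_def by force
  have carrier_t: "tracks t (int t) (cr t) 1"
    using inv unfolding window_tracked_def by blast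
  have "w (Suc t) (int (Suc t)) = w t (int t) + 0 * int n"
    using step[of "int t + 1"] refl_aff_succ_at_succ[OF n2, of "int t"] by (simp add: add.commute)
  then have "tracks (Suc t) (int (Suc t)) (cr (Suc t)) 1"
    unfolding cr by (rule tracks_step[OF carrier_t]) (simp add: cr)
  moreover have "tracks (Suc t) (int (Suc t) + int s) (bx (Suc t) ((Suc t + s - 1) mod (n - 1))) 0"
    if s: "1 \<le> s" "s \<le> n - 1" for s
  proof (cases "s = n - 1")
    case True
    have idx: "(Suc t + s - 1) mod (n - 1) = b" and pos: "int (Suc t) + int s = int t + int n"
      using True box_index_last n2 unfolding b_def by simp_all
    have "w (Suc t) (int t + int n) = w t (int t + 1 + int n)"
      using step[of "int t + int n"] refl_aff_succ_at_period[of n "int t"] by (simp add: algebra_simps)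
    also have "\<dots> = w t (int t + 1) + 1 * int n"
      using w_period[of t "int t + 1"] t by simp
    finally show ?thesis
      unfolding idx pos bx
      by (rule tracks_step[OF box1]) (use visits_box[OF b] in \<open>simp del: visits.simps\<close>)
  next
    case False
    have "w (Suc t) (int t + int (s + 1)) = w t (int t + int (s + 1))"
      using step[of "int t + (int s + 1)"] refl_aff_succ_fixes[of "int s + 1" n "int t"] s False
      by (simp add: algebra_simps)
    then show ?thesis
      using window_tracked_middle_box[OF inv s(1)] s False bx by simp
  qed
  ultimately show ?thesis
    unfolding window_tracked_def by auto
qed

lemma window_tracked_skip:
  assumes t: "t < T" and skip: "sk t" and inv: "window_tracked t"
  shows "window_tracked (Suc t)"
proof -
  define b where "b = t mod (n - 1)"
  have b: "b < n - 1" unfolding b_def by (rule column_less)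
  have step: "w (Suc t) = w t"
    using w_skip[OF t skip] .
  have cr: "cr (Suc t) = bx t b" and bx: "bx (Suc t) = (bx t)(b := cr t)"
    using skip by (simp_all add: carrier_Suc boxes_Suc b_def)
  have box1: "tracks t (int t + 1) (bx t b) 0"
    using inv n2 unfolding window_tracked_def b_def by force
  have "tracks (Suc t) (int (Suc t)) (cr (Suc t)) 1"
    using box1 unfolding cr
    by (rule tracks_step[where j = 0]) (simp_all add: step cr add.commute)
  moreover have "tracks (Suc t) (int (Suc t) + int s) (bx (Suc t) ((Suc t + s - 1) mod (n - 1))) 0"
    if s: "1 \<le> s" "s \<le> n - 1" for s
  proof (cases "s = n - 1")
    case True
    have idx: "(Suc t + s - 1) mod (n - 1) = b" and pos: "int (Suc t) + int s = int t + int n"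
      using True box_index_last n2 unfolding b_def by simp_all
    have carrier_t: "tracks t (int t) (cr t) 1"
      using inv unfolding window_tracked_def by blast
    have w_last: "w (Suc t) (int t + int n) = w t (int t) + 1 * int n"
      using step w_period[of t "int t"] t by simp
    have "C (cr t) (Suc t) = C (cr t) t"
      using carrier_ne_box[OF b, of t] cr by simp
    then show ?thesis
      unfolding idx pos bx fun_upd_same
      by (rule_tac tracks_step[OF carrier_t w_last]) (simp add: algebra_simps)
  next
    case False
    have "(t + (s + 1) - 1) mod (n - 1) \<noteq> b"
    proof
      assume "(t + (s + 1) - 1) mod (n - 1) = b"
      then have "(n - 1) dvd s"
        unfolding b_def using mod_eq_dvd_iff_nat[of t "t + s" "n - 1"] by simp
      then show False using s False by (simp add: nat_dvd_not_less)
    qed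
    then show ?thesis
      using window_tracked_middle_box[OF inv s(1)] s False step bx by simp
  qed
  ultimately show ?thesis
    unfolding window_tracked_def by auto
qed

lemma window_tracked: "t \<le> T \<Longrightarrow> window_tracked t"
proof (induction t)
  case 0
  have "modn n (int s) = int s" if "1 \<le> s" "s \<le> n - 1" for s
    using that by (simp add: modn_small)
  then show ?case
    using n2 modn_zero[of n] unfolding window_tracked_def tracks_def
    by (auto simp: algebra_simps)
next
  case (Suc t)
  then show ?case
    using window_tracked_keep window_tracked_skip by (cases "sk t") simp_all
qed

end

section \<open>Machines returning to their initial state\<close>

locale closed_machine = skip_machine +
  assumes skip_count: "card {t. t < T \<and> sk t} = 2 * n - 2"
    and carrier_final: "cr T = int n"
    and boxes_final: "\<And>b. b < n - 1 \<Longrightarrow> bx T b = int b + 1"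
    and visits_final: "\<And>k. k \<in> {1..int n} \<Longrightarrow> C k T = n - 1"
begin

definition column_skips :: "nat \<Rightarrow> nat set" where
  "column_skips b = {t. t < T \<and> sk t \<and> t mod (n - 1) = b}"

lemma finite_column_skips: "finite (column_skips b)"
  unfolding column_skips_def by simp

lemma visits_le: "t \<le> T \<Longrightarrow> C (cr t') t \<le> n - 1"
  using visits_mono[of t T "cr t'"] visits_final[of "cr t'"] carrier_range by simp

lemma box_stable_after_last_skip:
  assumes "\<And>s. t1 \<le> s \<Longrightarrow> s < T \<Longrightarrow> sk s \<Longrightarrow> s mod (n - 1) \<noteq> b" "t1 \<le> T"
  shows "bx T b = bx t1 b"
  using box_stable[of t1 T b] assms by blast

lemma visits_complete:
  assumes "k \<in> {1..int n}" "\<And>s. t < s \<Longrightarrow> s \<le> T \<Longrightarrow> cr s \<noteq> k" "t \<le> T"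
  shows "C k t = n - 1"
  using visits_stable[of t T k] assms visits_final by simp

lemma column_skips_nonempty:
  assumes b: "b < n - 1"
  shows "column_skips b \<noteq> {}"
proof
  assume "column_skips b = {}"
  then have "bx s b = int b + 1" if "s \<le> T" for s
    using box_stable[of 0 s b] that unfolding column_skips_def by auto
  then have "cr s \<noteq> int b + 1" if "s \<le> T" for s
    using carrier_ne_box[OF b, of s] that by simp
  moreover have "int b + 1 \<in> {1..int n}"
    using b by simp
  ultimately have "C (int b + 1) 0 = n - 1"
    using visits_complete[of "int b + 1" 0] by simp
  then show False using n2 by simp
qed

lemma two_le_card_column_skips:
  assumes b: "b < n - 1"
  shows "card (column_skips b) \<ge> 2"
proof (rule ccontr)
  assume "\<not> card (column_skips b) \<ge> 2"
  moreover have "card (column_skips b) \<noteq> 0"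
    using column_skips_nonempty[OF b] finite_column_skips by simp
  ultimately obtain \<tau> where \<tau>: "column_skips b = {\<tau>}"
    by (metis One_nat_def card_1_singletonE less_2_cases not_le)
  then have "\<tau> < T" "sk \<tau>" "\<tau> mod (n - 1) = b"
    unfolding column_skips_def by auto
  have only: "s = \<tau>" if "s < T" "sk s" "s mod (n - 1) = b" for s
    using \<tau> that unfolding column_skips_def by blast
  have "bx T b = bx (Suc \<tau>) b"
    by (rule box_stable_after_last_skip) (use only \<open>\<tau> < T\<close> in fastforce)+
  also have "\<dots> = cr \<tau>"
    using \<open>sk \<tau>\<close> \<open>\<tau> mod (n - 1) = b\<close> by (simp add: boxes_Suc)
  finally have "cr \<tau> = int b + 1"
    using boxes_final[OF b] by simp
  moreover have "bx \<tau> b = bx 0 b"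
  proof (rule box_stable)
    show "s mod (n - 1) \<noteq> b" if "0 \<le> s" "s < \<tau>" "sk s" for s
      using only[of s] that \<open>\<tau> < T\<close> by auto
  qed simp
  ultimately show False
    using carrier_ne_box[OF b, of \<tau>] by simp
qed

text \<open>Each of the \<open>n-1\<close> columns needs two skips to return to its initial content, and
  there are only \<open>2n-2\<close> skips.\<close>

lemma card_column_skips:
  assumes b: "b < n - 1"
  shows "card (column_skips b) = 2"
proof -
  have "{t. t < T \<and> sk t} = (\<Union>b'<n - 1. column_skips b')"
    unfolding column_skips_def using column_less by blast
  moreover have "card (\<Union>b'<n - 1. column_skips b') = (\<Sum>b'<n - 1. card (column_skips b'))"
    by (rule card_UN_disjoint) (auto simp: column_skips_def finite_column_skips)
  ultimately have "(\<Sum>b'<n - 1. card (column_skips b')) = (\<Sum>b'<n - 1. 2)"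
    using skip_count by simp
  then show ?thesis
    using sum_mono_inv[where f = "\<lambda>_. 2" and g = "\<lambda>b'. card (column_skips b')" and I = "{..<n - 1}"]
      two_le_card_column_skips b by simp
qed

lemma box_initial_at_first_skip:
  assumes "\<tau> \<in> column_skips b" "\<sigma> \<in> column_skips b" "\<tau> < \<sigma>"
  shows "bx \<tau> b = int b + 1"
proof -
  have b: "b < n - 1"
    using assms(1) column_less unfolding column_skips_def by auto
  have "column_skips b = {\<tau>, \<sigma>}"
  proof (rule card_subset_eq[symmetric])
    show "{\<tau>, \<sigma>} \<subseteq> column_skips b" "card {\<tau>, \<sigma>} = card (column_skips b)"
      using assms card_column_skips[OF b] by auto
  qed (rule finite_column_skips)
  then have only: "s = \<tau> \<or> s = \<sigma>" if "s < T" "sk s" "s mod (n - 1) = b" for s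
    using that unfolding column_skips_def by blast
  have "bx \<tau> b = bx 0 b"
  proof (rule box_stable)
    show "s mod (n - 1) \<noteq> b" if "0 \<le> s" "s < \<tau>" "sk s" for s
      using only[of s] that assms(1,3) unfolding column_skips_def by auto
  qed simp
  then show ?thesis by simp
qed

end

context closed_machine
begin

text \<open>If \<open>\<tau>\<close> were the second skip of its column, the residue \<open>k\<close> deposited there would stay
  in that box until the end and could not complete its \<open>n-1\<close> visits.\<close>

lemma box_initial_at_skip:
  assumes \<tau>: "\<tau> < T" "sk \<tau>" and k: "cr \<tau> = k" and incomplete: "C k \<tau> < n - 1"
  shows "bx \<tau> (\<tau> mod (n - 1)) = int (\<tau> mod (n - 1)) + 1"
proof -
  define b where "b = \<tau> mod (n - 1)"
  have b: "b < n - 1" unfolding b_def by (rule column_less)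
  have \<tau>_col: "\<tau> \<in> column_skips b"
    using \<tau> unfolding column_skips_def b_def by simp
  show ?thesis
  proof (cases "\<exists>\<sigma>\<in>column_skips b. \<tau> < \<sigma>")
    case True
    then show ?thesis
      using box_initial_at_first_skip[OF \<tau>_col] b_def by auto
  next
    case False
    have "bx t b = bx (Suc \<tau>) b" if "Suc \<tau> \<le> t" "t \<le> T" for t
    proof (rule box_stable)
      show "s mod (n - 1) \<noteq> b" if "Suc \<tau> \<le> s" "s < t" "sk s" for s
        using False that \<open>t \<le> T\<close> unfolding column_skips_def by auto
    qed (rule that(1))
    moreover have "bx (Suc \<tau>) b = k"
      using \<tau> k by (simp add: boxes_Suc b_def)
    ultimately have "cr t \<noteq> k" if "\<tau> < t" "t \<le> T" for t
      using carrier_ne_box[OF b, of t] that by (metis Suc_leI)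
    moreover have "k \<in> {1..int n}"
      using carrier_range[of \<tau>] k by simp
    ultimately have "C k \<tau> = n - 1"
      using visits_complete[of k \<tau>] \<tau> by simp
    then show ?thesis
      using incomplete by simp
  qed
qed

lemma carrier_after_skip:
  assumes \<tau>: "\<tau> < T" "sk \<tau>" and k: "cr \<tau> = k" and incomplete: "C k \<tau> < n - 1"
  shows "cr (Suc \<tau>) = (k - 1 + int (C k \<tau>)) mod (int n - 1) + 1"
proof -
  have "cr (Suc \<tau>) = int (\<tau> mod (n - 1)) + 1"
    using box_initial_at_skip[OF assms] \<tau> by (simp add: carrier_Suc)
  moreover have "int (\<tau> mod (n - 1)) = int \<tau> mod (int n - 1)"
    using n2 by (simp add: zmod_int of_nat_diff)
  ultimately show ?thesis
    using carrier_congruence[OF k] by simp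
qed

lemma carrier_after_skip_from_n:
  assumes \<tau>: "\<tau> < T" "sk \<tau>" and k: "cr \<tau> = int n"
  shows "C (int n) \<tau> < n - 1 \<and> cr (Suc \<tau>) = int (C (int n) \<tau>) + 1"
proof -
  have incomplete: "C (int n) \<tau> < n - 1"
    using visits_strict_mono[OF \<tau>(1) carrier_final] visits_final[of "int n"] n2 by simp
  have "cr (Suc \<tau>) = (int n - 1 + int (C (int n) \<tau>)) mod (int n - 1) + 1"
    using carrier_after_skip[OF \<tau> k incomplete] by simp
  also have "\<dots> = int (C (int n) \<tau>) + 1"
    using incomplete n2 by (simp add: add.commute)
  finally show ?thesis
    using incomplete by simp
qed

lemma skip_from:
  assumes k: "k \<in> {1..<int n}"
  obtains \<tau> where "\<tau> < T" "sk \<tau>" "cr \<tau> = k"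
proof -
  define S where "S = {s. s \<le> T \<and> cr s = k}"
  have "finite S"
    unfolding S_def by simp
  moreover have "S \<noteq> {}"
  proof
    assume "S = {}"
    then have "C k 0 = n - 1"
      using visits_complete[of k 0] k unfolding S_def by auto
    then show False using n2 by simp
  qed
  ultimately have \<tau>: "Max S \<in> S" and le_max: "s \<in> S \<Longrightarrow> s \<le> Max S" for s
    by simp_all
  have "Max S \<noteq> T"
    using \<tau> carrier_final k unfolding S_def by auto
  then have lt: "Max S < T"
    using \<tau> unfolding S_def by simp
  have "Suc (Max S) \<notin> S"
    using le_max by fastforce
  then have "cr (Suc (Max S)) \<noteq> k"
    using lt unfolding S_def by simp
  then have "sk (Max S)"
    using \<tau> unfolding S_def by (auto simp: carrier_Suc split: if_splits)
  then show ?thesis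
    using that lt \<tau> unfolding S_def by blast
qed

lemma visits_before_next_carrier: "\<tau> < T \<Longrightarrow> C (cr (Suc \<tau>)) \<tau> \<le> n - 2"
  using visits_le[of "Suc \<tau>" "Suc \<tau>"] by simp

text \<open>The new carrier comes out of its initial box, so by the congruence its number of
  visits is divisible by \<open>n-1\<close>.\<close>

lemma next_carrier_unvisited:
  assumes \<tau>: "\<tau> < T" "sk \<tau>" and incomplete: "C (cr \<tau>) \<tau> < n - 1"
  shows "cr (Suc \<tau>) = int (\<tau> mod (n - 1)) + 1 \<and> C (cr (Suc \<tau>)) \<tau> = 0"
proof -
  define b where "b = \<tau> mod (n - 1)"
  have b: "b < n - 1" unfolding b_def by (rule column_less)
  have box: "bx \<tau> b = int b + 1"
    using box_initial_at_skip[OF \<tau> refl incomplete] unfolding b_def .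
  then have next_carrier: "cr (Suc \<tau>) = int b + 1"
    using \<tau> by (simp add: carrier_Suc b_def)
  have "(int b + int (C (int b + 1) \<tau>)) mod (int n - 1) = int b mod (int n - 1)"
    using box_congruence[OF b box] by simp
  then have "(int n - 1) dvd int (C (int b + 1) \<tau>)"
    by (simp add: mod_eq_dvd_iff)
  moreover have "int (C (int b + 1) \<tau>) < int n - 1"
    using visits_before_next_carrier[OF \<tau>(1)] n2 unfolding next_carrier by linarith
  ultimately have "C (int b + 1) \<tau> = 0"
    using zdvd_imp_le by fastforce
  then show ?thesis
    using next_carrier unfolding b_def by simp
qed

text \<open>By the tracking invariant this quantity is \<open>(n-1) (w\<^sub>\<tau>(\<tau>+1) - w\<^sub>\<tau>(\<tau>))\<close>, so its
  positivity is \<open>a\<^sub>i\<^sub>-\<^sub>1 < b\<^sub>i\<close> (see \<open>orientation_at_skip\<close>).\<close>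

lemma skip_orientation:
  assumes \<tau>: "\<tau> < T" "sk \<tau>"
  shows "0 < cr \<tau> - cr (Suc \<tau>) + int n * (int (C (cr \<tau>) \<tau>) - int (C (cr (Suc \<tau>)) \<tau>))"
proof -
  define e1 where "e1 = cr \<tau>"
  define e2 where "e2 = cr (Suc \<tau>)"
  have range: "1 \<le> e1" "e1 \<le> int n" "1 \<le> e2" "e2 \<le> int n"
    using carrier_range unfolding e1_def e2_def by auto
  consider "C e1 \<tau> = n - 1" | "C e1 \<tau> < n - 1"
    using visits_le[of \<tau> \<tau>] \<tau> unfolding e1_def by fastforce
  then have "0 < e1 - e2 + int n * (int (C e1 \<tau>) - int (C e2 \<tau>))"
  proof cases
    case 1
    then have "int n \<le> int n * (int (C e1 \<tau>) - int (C e2 \<tau>))"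
      using visits_before_next_carrier[OF \<tau>(1)] n2 unfolding e2_def by (simp add: of_nat_diff)
    then show ?thesis using range by linarith
  next
    case 2
    then have "cr (Suc \<tau>) = int (\<tau> mod (n - 1)) + 1" "C (cr (Suc \<tau>)) \<tau> = 0"
      using next_carrier_unvisited[OF \<tau>] unfolding e1_def by blast+
    then have e2: "e2 = int (\<tau> mod (n - 1)) + 1" "C e2 \<tau> = 0"
      unfolding e2_def .
    show ?thesis
    proof (cases "\<tau> = 0")
      case True
      then show ?thesis
        using e2 column_less[of 0] unfolding e1_def by simp
    next
      case False
      then have "int n * 1 \<le> int n * int (C e1 \<tau>)"
        using visits_pos[of \<tau> e1] unfolding e1_def by (intro mult_left_mono) simp_all
      then have "0 < e1 - e2 + int n * int (C e1 \<tau>)"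
        using range by linarith
      then show ?thesis
        using e2(2) by simp
    qed
  qed
  then show ?thesis
    unfolding e1_def e2_def .
qed

end

section \<open>The cyclic order of neighbours\<close>

lemma dropWhile_le_sorted_gt:
  fixes c :: "'a::linorder"
  assumes "sorted_wrt (<) xs" "x \<in> set (dropWhile (\<lambda>y. y \<le> c) xs)"
  shows "c < x"
  using assms by (induction xs) (auto split: if_splits)

text \<open>Reducing \<open>k + f\<close> (\<open>1 \<le> f < N\<close>) into \<open>{1..N}\<close> sends the \<open>f \<le> N - k\<close> above \<open>k\<close>
  and the others below \<open>k\<close>, each part in increasing order.\<close>

lemma cyc_cond_shifted_residues:
  fixes k N c :: int and fs :: "int list"
  assumes k: "1 \<le> k" "k \<le> N" and sorted: "sorted_wrt (<) fs"
    and range: "\<forall>f\<in>set fs. 1 \<le> f \<and> f < N"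
  shows "cyc_cond k (map (\<lambda>f. (k - 1 + f) mod N + 1) fs @ [c])"
proof -
  define g where "g f = (k - 1 + f) mod N + 1" for f
  define B where "B = takeWhile (\<lambda>f. f \<le> N - k) fs"
  define S where "S = dropWhile (\<lambda>f. f \<le> N - k) fs"
  have fs: "fs = B @ S"
    unfolding B_def S_def by simp
  have B: "g f = k + f" "k < g f" if "f \<in> set B" for f
  proof -
    have "f \<in> set fs" "f \<le> N - k"
      using that set_takeWhileD unfolding B_def by fastforce+
    then show "g f = k + f" "k < g f"
      using range k unfolding g_def by auto
  qed
  have S: "g f = k + f - N" "g f < k" if "f \<in> set S" for f
  proof -
    have "f \<in> set fs" "N - k < f"
      using that dropWhile_le_sorted_gt[OF sorted] unfolding S_def by (auto dest: set_dropWhileD)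
    moreover from this have "(k - 1 + f) mod N = k - 1 + f - N"
      using range k by (intro mod_pos_pos_trivial[of "k - 1 + f - N" N, simplified]) auto
    ultimately show "g f = k + f - N" "g f < k"
      using range unfolding g_def by auto
  qed
  have "sorted_wrt (<) B" "sorted_wrt (<) S"
    using sorted unfolding fs sorted_wrt_append by simp_all
  then have "sorted_wrt (<) (map g B)" "sorted_wrt (<) (map g S)"
    unfolding sorted_wrt_map by (auto elim!: sorted_wrt_mono_rel[rotated] simp: B S)
  then have "sorted_wrt (<) (map g S @ [k] @ map g B)"
    unfolding sorted_wrt_append using B(2) S(2) by fastforce
  moreover have "length B < length (map g fs @ [c])"
    unfolding fs by simp
  moreover have "drop (length B) (butlast (map g fs @ [c])) = map g S"
    "take (length B) (map g fs @ [c]) = map g B"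
    unfolding fs by (simp_all add: butlast_append)
  ultimately show ?thesis
    unfolding cyc_cond_def g_def[abs_def] by metis
qed

context closed_machine
begin

definition skip_times :: "nat list" where
  "skip_times = filter sk [0..<T]"

lemma sorted_skip_times: "sorted_wrt (<) skip_times"
  unfolding skip_times_def by (rule sorted_wrt_filter) simp

lemma set_skip_times: "t \<in> set skip_times \<longleftrightarrow> t < T \<and> sk t"
  unfolding skip_times_def by auto

definition skips_from :: "int \<Rightarrow> nat list" where
  "skips_from k = filter (\<lambda>t. cr t = k) skip_times"

lemma sorted_skips_from: "sorted_wrt (<) (skips_from k)"
  unfolding skips_from_def by (rule sorted_wrt_filter[OF sorted_skip_times])

lemma set_skips_from: "t \<in> set (skips_from k) \<longleftrightarrow> t < T \<and> sk t \<and> cr t = k"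
  unfolding skips_from_def using set_skip_times by auto

lemma sorted_neighbours_of_n: "sorted_wrt (<) (map (\<lambda>t. cr (Suc t)) (skips_from (int n)))"
  unfolding sorted_wrt_map
proof (rule sorted_wrt_mono_rel[OF _ sorted_skips_from])
  fix x y
  assume "x \<in> set (skips_from (int n))" "y \<in> set (skips_from (int n))" "x < y"
  then show "cr (Suc x) < cr (Suc y)"
    using carrier_after_skip_from_n visits_strict_mono[of x y "int n"] by (auto simp: set_skips_from)
qed

lemma skips_from_nonempty:
  assumes k: "k \<in> {1..<int n}"
  shows "skips_from k \<noteq> []"
proof (rule skip_from[OF k])
  fix \<tau> assume "\<tau> < T" "sk \<tau>" "cr \<tau> = k"
  then have "\<tau> \<in> set (skips_from k)"
    using set_skips_from by simp
  then show ?thesis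
    by auto
qed

lemma visits_at_earlier_skips_from:
  assumes k: "k \<in> {1..<int n}" and t: "t \<in> set (butlast (skips_from k))"
  shows "1 \<le> C k t \<and> C k t < n - 1"
proof -
  define D where "D = skips_from k"
  have D_split: "D = butlast D @ [last D]"
    using skips_from_nonempty[OF k] unfolding D_def by simp
  have "sorted_wrt (<) (butlast D @ [last D])"
    using sorted_skips_from[of k] unfolding D_def[symmetric] by (subst (asm) D_split)
  then have "t < last D"
    using t unfolding D_def[symmetric] by (simp add: sorted_wrt_append)
  moreover have last: "last D \<in> set D"
    by (subst D_split) simp
  ultimately have "C k t < C k (last D)"
    using visits_strict_mono set_skips_from unfolding D_def by blast
  moreover have "C k (last D) \<le> n - 1"
    using visits_le[of "last D" "last D"] last set_skips_from unfolding D_def by auto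
  moreover have "cr t = k"
    using t set_skips_from[of t k] by (auto dest: in_set_butlastD)
  moreover from this have "t \<noteq> 0"
    using k by (cases t) auto
  ultimately show ?thesis
    using visits_pos[of t k] by simp
qed

lemma cyc_cond_neighbours:
  assumes k: "k \<in> {1..<int n}"
  shows "cyc_cond k (map (\<lambda>t. cr (Suc t)) (skips_from k))"
proof -
  define D where "D = skips_from k"
  have D_split: "D = butlast D @ [last D]"
    using skips_from_nonempty[OF k] unfolding D_def by simp
  have D: "t < T" "sk t" "cr t = k" "1 \<le> C k t" "C k t < n - 1" if "t \<in> set (butlast D)" for t
    using that visits_at_earlier_skips_from[OF k] set_skips_from[of t k]
    unfolding D_def by (auto dest: in_set_butlastD)
  define fs where "fs = map (\<lambda>t. int (C k t)) (butlast D)"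
  have "map (\<lambda>t. cr (Suc t)) (butlast D) = map (\<lambda>f. (k - 1 + f) mod (int n - 1) + 1) fs"
    unfolding fs_def using carrier_after_skip D by simp
  then have "map (\<lambda>t. cr (Suc t)) D = map (\<lambda>f. (k - 1 + f) mod (int n - 1) + 1) fs @ [cr (Suc (last D))]"
    by (subst D_split) simp
  moreover have "sorted_wrt (<) (butlast D)"
    using sorted_skips_from[of k] D_split unfolding D_def by (metis sorted_wrt_append)
  then have "sorted_wrt (<) fs"
    unfolding fs_def sorted_wrt_map by (rule sorted_wrt_mono_rel[rotated]) (use D visits_strict_mono in auto)
  moreover have "\<forall>f\<in>set fs. 1 \<le> f \<and> f < int n - 1"
    unfolding fs_def using D by force
  ultimately show ?thesis
    using cyc_cond_shifted_residues[of k "int n - 1" fs] k unfolding D_def by simp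
qed

end

section \<open>The prefix products and the inversions at the skips\<close>

context subword_walk
begin

lemma inversion_eq: "t < T \<Longrightarrow> tinv n u (Suc t) = refl_aff n (w t (int t)) (w t (int t + 1))"
  using conj_refl_aff[of n "w t" "int t" "int t + 1"] w_periodic_bij[of t] mod_succ_ne[OF n2]
    sigma_Suc[of n t] n2
  unfolding tinv_def by simp

text \<open>Moving the letters of the word past \<open>w\<^sub>t\<close> one at a time: a skipped letter
  \<open>\<sigma>\<^sub>t\<^sub>+\<^sub>1\<close> becomes the inversion \<open>w\<^sub>t \<sigma>\<^sub>t\<^sub>+\<^sub>1 w\<^sub>t\<^sup>-\<^sup>1\<close>.\<close>

lemma word_prefix_eq_inversions_prefix:
  "t \<le> T \<Longrightarrow> prodw (map (\<lambda>j. sigma n (Suc j)) [0..<t]) =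
     prodw (map (\<lambda>j. tinv n u (Suc j)) (filter sk [0..<t])) \<circ> w t"
proof (induction t)
  case (Suc t)
  then have t: "t < T" by simp
  have sigma: "sigma n (Suc t) = refl_aff n (int t) (int t + 1)"
    using sigma_Suc[of n t] n2 by simp
  define P where "P = prodw (map (\<lambda>j. tinv n u (Suc j)) (filter sk [0..<t]))"
  have "prodw (map (\<lambda>j. sigma n (Suc j)) [0..<Suc t])
      = prodw (map (\<lambda>j. sigma n (Suc j)) [0..<t]) \<circ> sigma n (Suc t)"
    by (simp add: prodw_snoc)
  also have "\<dots> = P \<circ> (w t \<circ> sigma n (Suc t))"
    using Suc.IH t unfolding P_def by (simp only: o_assoc less_imp_le)
  finally have split: "prodw (map (\<lambda>j. sigma n (Suc j)) [0..<Suc t]) = P \<circ> (w t \<circ> sigma n (Suc t))" .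
  show ?case
  proof (cases "sk t")
    case False
    then have "w (Suc t) = w t \<circ> sigma n (Suc t)"
      using upref_Suc[of t u] length_u t letter[OF t] sigma by simp
    then show ?thesis
      using False split unfolding P_def by simp
  next
    case True
    have "inj (w t)"
      using w_periodic_bij[of t] t bij_is_inj by auto
    then have "w t \<circ> sigma n (Suc t) = tinv n u (Suc t) \<circ> w (Suc t)"
      unfolding tinv_def w_skip[OF t True] by (simp add: fun_eq_iff)
    then show ?thesis
      using True split unfolding P_def by (simp add: prodw_snoc o_assoc)
  qed
qed simp

end

locale S_walk = subword_walk +
  assumes prodw_u: "prodw u = id"
    and skips_length: "length (skips u) = 2 * n - 2"
begin

lemma w_final: "w T = id"
  unfolding upref_def using length_u prodw_u by simp

lemma skips_eq: "skips u = map Suc (filter sk [0..<T])"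
proof -
  have "[1..<length u + 1] = map Suc [0..<T]"
    using length_u by (simp add: map_Suc_upt)
  moreover have "sk = (\<lambda>t. u ! t = id)"
    using skip_iff by blast
  ultimately show ?thesis
    unfolding skips_def by (simp add: filter_map o_def)
qed

lemma card_skips: "card {t. t < T \<and> sk t} = 2 * n - 2"
proof -
  have "{t. t < T \<and> sk t} = set (filter sk [0..<T])"
    by auto
  then show ?thesis
    using skips_length skips_eq distinct_card[of "filter sk [0..<T]"] by simp
qed

lemma int_T: "int T = int n * (int n - 1)"
  using n2 by (simp add: of_nat_diff)

lemma carrier_visits_final: "cr T = int n \<and> C (int n) T = n - 1"
proof -
  have tracks: "tracks T (int T) (cr T) 1"
    using window_tracked[of T] unfolding window_tracked_def by simp
  have "modn n (int T) = modn n (0 + (int n - 1) * int n)"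
    using int_T by (simp add: algebra_simps)
  also have "\<dots> = int n"
    using modn_shift[of n 0 "int n - 1"] modn_zero[of n] n2 by simp
  finally have cr: "cr T = int n"
    using tracks w_final unfolding tracks_def by simp
  define c where "c = int (C (int n) T)"
  have "int n * ((int n - 1) * (int n - 2)) = int n * ((int n - 1) * (int n - 1) - c)"
    using tracks w_final int_T unfolding tracks_def cr c_def by (simp add: algebra_simps)
  then have "(int n - 1) * (int n - 2) = (int n - 1) * (int n - 1) - c"
    using n2 by (metis mult_left_cancel of_nat_eq_0_iff not_numeral_le_zero)
  then have "c = int n - 1"
    by (simp add: algebra_simps)
  then show ?thesis
    using cr c_def n2 by simp
qed

lemma boxes_visits_final:
  assumes s: "1 \<le> s" "s \<le> n - 1"
  shows "bx T (s - 1) = int s \<and> C (int s) T = n - 1"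
proof -
  have "T + s - 1 = (s - 1) + n * (n - 1)"
    using s by simp
  then have "(T + s - 1) mod (n - 1) = (s - 1 + n * (n - 1)) mod (n - 1)"
    by (simp only:)
  also have "\<dots> = s - 1"
    using s by (simp only: mod_mult_self1) simp
  finally have idx: "(T + s - 1) mod (n - 1) = s - 1" .
  then have tracks: "tracks T (int T + int s) (bx T (s - 1)) 0"
    using window_tracked[of T] s unfolding window_tracked_def by force
  have "modn n (int T + int s) = modn n (int s + (int n - 1) * int n)"
    using int_T by (simp add: algebra_simps)
  then have box: "bx T (s - 1) = int s"
    using tracks w_final modn_shift modn_small[of "int s" n] s unfolding tracks_def by simp
  define c where "c = int (C (int s) T)"
  have "int n * ((int n - 1) * (int n - 1)) = int n * (int n * (int n - 1) - c)"
    using tracks w_final int_T unfolding tracks_def box c_def by (simp add: algebra_simps)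
  then have "(int n - 1) * (int n - 1) = int n * (int n - 1) - c"
    using n2 by (metis mult_left_cancel of_nat_eq_0_iff not_numeral_le_zero)
  then have "c = int n - 1"
    by (simp add: algebra_simps)
  then show ?thesis
    using box c_def n2 by simp
qed

lemma closed_machine: "closed_machine n sk"
proof
  show "card {t. t < T \<and> sk t} = 2 * n - 2"
    by (rule card_skips)
  show "cr T = int n"
    using carrier_visits_final by simp
  show "bx T b = int b + 1" if "b < n - 1" for b
    using boxes_visits_final[of "b + 1"] that by simp
  show "C k T = n - 1" if "k \<in> {1..int n}" for k
    using carrier_visits_final boxes_visits_final[of "nat k"] that
    by (cases "k = int n") auto
qed

end

sublocale S_walk \<subseteq> closed_machine n sk
  by (rule closed_machine)

section \<open>The factorization \<open>r\<^sup>u\<close>\<close>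

lemma map_nth_filter_nth:
  "map (\<lambda>i. g (xs ! i)) (filter (\<lambda>i. P (xs ! i)) [0..<length xs]) = map g (filter P xs)"
proof -
  have "filter P xs = filter P (map (\<lambda>i. xs ! i) [0..<length xs])"
    by (simp add: map_nth)
  then show ?thesis
    by (simp add: filter_map o_def)
qed

context closed_machine
begin

lemma no_skip_between_skip_times:
  assumes i: "Suc i < length skip_times" and s: "skip_times ! i < s" "s < skip_times ! Suc i"
  shows "\<not> sk s"
proof
  assume "sk s"
  moreover have "s < T"
    using s nth_mem[OF i] set_skip_times by auto
  ultimately obtain j where j: "j < length skip_times" "skip_times ! j = s"
    using set_skip_times by (metis in_set_conv_nth)
  have "\<not> j \<le> i"
    using sorted_wrt_nth_less[OF sorted_skip_times, of j i] i j s by (cases "j = i") auto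
  moreover have "\<not> Suc i \<le> j"
    using sorted_wrt_nth_less[OF sorted_skip_times, of "Suc i" j] i j s by (cases "j = Suc i") auto
  ultimately show False by simp
qed

end

context S_walk
begin

lemma r_of_eq: "r_of n u = map (\<lambda>t. refl_aff n (w t (int t)) (w t (int t + 1))) skip_times"
  unfolding r_of_def skips_eq skip_times_def
  by (auto simp: inversion_eq)

lemma residue_at_carrier: "t \<le> T \<Longrightarrow> modn n (w t (int t)) = cr t"
  using window_tracked unfolding window_tracked_def tracks_def by blast

lemma residue_after_skip: "t < T \<Longrightarrow> sk t \<Longrightarrow> modn n (w t (int t + 1)) = cr (Suc t)"
  using window_tracked[of t] n2 unfolding window_tracked_def tracks_def
  by (force simp: carrier_Suc)

lemma residues_at_skip_differ:
  "t < T \<Longrightarrow> sk t \<Longrightarrow> w t (int t) mod int n \<noteq> w t (int t + 1) mod int n"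
  using residue_at_carrier[of t] residue_after_skip[of t] carrier_ne_box[OF column_less, of t]
  by (simp add: carrier_Suc flip: modn_eq_iff)

lemma orientation_at_skip:
  assumes t: "t < T" "sk t"
  shows "w t (int t) < w t (int t + 1)"
proof -
  define e1 where "e1 = cr t"
  define e2 where "e2 = cr (Suc t)"
  have "tracks t (int t) e1 1"
    using window_tracked[of t] t unfolding window_tracked_def e1_def by simp
  moreover have "tracks t (int t + 1) e2 0"
    using window_tracked[of t] t n2 unfolding window_tracked_def e2_def
    by (force simp: carrier_Suc)
  ultimately have "(int n - 1) * (w t (int t + 1) - w t (int t))
      = e1 - e2 + int n * (int (C e1 t) - int (C e2 t))"
    unfolding tracks_def by (simp add: algebra_simps)
  then have "0 < (int n - 1) * (w t (int t + 1) - w t (int t))"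
    using skip_orientation[OF t] unfolding e1_def e2_def by simp
  then show ?thesis
    using n2 by (simp add: zero_less_mult_iff)
qed

lemma prodw_r_of: "prodw (r_of n u) = lambda_aff n"
proof -
  have "prodw (r_of n u) = prodw (map (\<lambda>j. sigma n (Suc j)) [0..<T])"
    using word_prefix_eq_inversions_prefix[of T] w_final unfolding r_of_def skips_eq
    by (simp add: comp_def)
  also have "\<dots> = lambda_aff n"
    using prodw_word_eq_coxeter_pow[of n "n - 1"] coxeter_pow_eq_lambda[OF n2] by simp
  finally show ?thesis .
qed

definition inv_low :: "nat \<Rightarrow> int" where
  "inv_low i = w (skip_times ! i) (int (skip_times ! i))"

definition inv_high :: "nat \<Rightarrow> int" where
  "inv_high i = w (skip_times ! (i - 1)) (int (skip_times ! (i - 1)) + 1)"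

lemma length_r_of: "length (r_of n u) = 2 * n - 2"
  unfolding r_of_def using skips_length by simp

lemma length_skip_times: "length skip_times = 2 * n - 2"
  using length_r_of unfolding r_of_eq by simp

lemma skip_time_nth: "i < 2 * n - 2 \<Longrightarrow> skip_times ! i < T \<and> sk (skip_times ! i)"
  using nth_mem[of i skip_times] length_skip_times set_skip_times by auto

lemma treelike_wit: "treelike_wit n (r_of n u) inv_low inv_high"
  unfolding treelike_wit_def
proof (intro conjI ballI)
  fix i
  assume "i \<in> {1..length (r_of n u)}"
  then have i: "i - 1 < 2 * n - 2"
    using length_r_of by auto
  show "inv_low (i - 1) mod int n \<noteq> inv_high i mod int n"
    "r_of n u ! (i - 1) = refl_aff n (inv_low (i - 1)) (inv_high i)"
    "inv_low (i - 1) < inv_high i"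
    using residues_at_skip_differ orientation_at_skip skip_time_nth[OF i] i length_skip_times
    unfolding inv_low_def inv_high_def r_of_eq by simp_all
next
  fix i
  assume "i \<in> {1..2 * n - 3}"
  then have i: "i < 2 * n - 2" "Suc (i - 1) = i"
    by auto
  define t0 where "t0 = skip_times ! (i - 1)"
  define t1 where "t1 = skip_times ! i"
  have t0: "t0 < T" "sk t0" and t1: "t1 < T"
    using skip_time_nth i unfolding t0_def t1_def by (simp_all add: less_imp_diff_less)
  have "t0 < t1"
    using sorted_wrt_nth_less[OF sorted_skip_times, of "i - 1" i] i length_skip_times
    unfolding t0_def t1_def by simp
  then have "cr t1 = cr (Suc t0)"
    using no_skip_between_skip_times[of "i - 1"] i length_skip_times
    by (intro carrier_stable) (auto simp: t0_def t1_def)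
  then show "inv_low i mod int n = inv_high i mod int n"
    using residue_at_carrier[of t1] residue_after_skip[OF t0] t1
    unfolding inv_low_def inv_high_def t0_def[symmetric] t1_def[symmetric] modn_eq_iff[symmetric]
    by simp
qed

lemma Nlist_eq:
  assumes k: "k \<in> {1..int n}"
  shows "Nlist n (length (r_of n u)) inv_low inv_high k = map (\<lambda>t. cr (Suc t)) (skips_from k)"
proof -
  define M where "M = length skip_times"
  have "length (r_of n u) = M"
    using length_r_of length_skip_times unfolding M_def by simp
  then have "Nlist n (length (r_of n u)) inv_low inv_high k = map (\<lambda>i. modn n (inv_high i))
      (filter (\<lambda>i. modn n (inv_low (i - 1)) = modn n k) (map Suc [0..<M]))"
    unfolding Nlist_def by (simp add: map_Suc_upt)
  also have "\<dots> = map (\<lambda>i. modn n (inv_high (Suc i))) (filter (\<lambda>i. modn n (inv_low i) = k) [0..<M])"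
    using k modn_small[of k n] by (simp add: filter_map o_def)
  also have "\<dots> = map (\<lambda>i. cr (Suc (skip_times ! i))) (filter (\<lambda>i. cr (skip_times ! i) = k) [0..<M])"
  proof -
    have "modn n (inv_low i) = cr (skip_times ! i)" "modn n (inv_high (Suc i)) = cr (Suc (skip_times ! i))"
      if "i < M" for i
      using residue_at_carrier residue_after_skip skip_time_nth[of i] that length_skip_times
      unfolding M_def inv_low_def inv_high_def by (simp_all add: less_imp_le)
    then show ?thesis
      by (auto intro!: map_cong filter_cong)
  qed
  also have "\<dots> = map (\<lambda>t. cr (Suc t)) (skips_from k)"
    unfolding M_def skips_from_def by (rule map_nth_filter_nth)
  finally show ?thesis .
qed

lemma cyclic_factorization: "cyclic_factorization_of_lambda n (r_of n u)"
proof -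
  have "is_reflection n (refl_aff n (w t (int t)) (w t (int t + 1)))" if "t \<in> set skip_times" for t
    using residues_at_skip_differ that set_skip_times unfolding is_reflection_def by blast
  then have "r_of n u \<in> fact_lambda n"
    using length_r_of prodw_r_of unfolding fact_lambda_def by (auto simp: r_of_eq)
  moreover have "sorted_wrt (<) (Nlist n (length (r_of n u)) inv_low inv_high (int n))"
    using Nlist_eq[of "int n"] sorted_neighbours_of_n n2 by simp
  moreover have "\<forall>k\<in>{1..<int n}. cyc_cond k (Nlist n (length (r_of n u)) inv_low inv_high k)"
    using Nlist_eq cyc_cond_neighbours by simp
  ultimately show ?thesis
    unfolding cyclic_factorization_of_lambda_def treelike_def cyclic_fact_def
    using treelike_wit by blast
qed

end

theorem corollary5p17:
  fixes n :: nat and u :: "(int \<Rightarrow> int) list"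
  assumes "n \<ge> 2" and "u \<in> S_set n"
  shows "cyclic_factorization_of_lambda n (r_of n u)"
proof -
  interpret S_walk n "\<lambda>t. u ! t = id" u
    using assms unfolding S_set_def by unfold_locales auto
  show ?thesis
    by (rule cyclic_factorization)
qed

end
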